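(* Let $m\ge1$ and let $T$ be a finite tree with labels in an alphabet $\Gamma\supseteq\{a_1,\dots,a_m,\varepsilon\}$, in which every node has at most $m+1$ children and every leaf and every node with at least $2$ children is labelled $\varepsilon$. Let $N\ge1$. If for each $a\in\{a_1,\dots,a_m\}$ the tree $T$ contains at least $N$ nodes labelled $a$, then for each $a\in\{a_1,\dots,a_m\}$ we have $\mathrm{score}_a(T)\ge\log_{m+1}N$.
   Context: For a letter $a$, $\mathrm{score}_a(T)$ is defined recursively: if $T$ is a single leaf, $\mathrm{score}_a(T)=0$; if the root of $T$ has label $\gamma$ and exactly one child subtree $T_1$, then $\mathrm{score}_a(T)=\mathrm{score}_a(T_1)+\iota_a(\gamma)$ where $\iota_a(\gamma)=1$ if $\gamma=a$ and $0$ otherwise; if the root (labelled $\varepsilon$) has child subtrees $T_1,\dots,T_k$ with $k\ge2$, then $\mathrm{score}_a(T)=\max_{1\le i\le k}\big(\mathrm{score}_a(T_i)+\iota\big(\sum_{j\ne i}\mathrm{score}_a(T_j)\big)\big)$, where for a natural number $x$, $\iota(x)=0$ if $x=0$ and $\iota(x)=1$ if $x>0$. *)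

theory Defs
  imports Complex_Main
begin

datatype 'g ltree = Node 'g "'g ltree list"

definition iota :: "nat \<Rightarrow> nat" where
  "iota x = (if x = 0 then 0 else 1)"

definition iota_lbl :: "'g \<Rightarrow> 'g \<Rightarrow> nat" where
  "iota_lbl a g = (if g = a then 1 else 0)"

fun score :: "'g \<Rightarrow> 'g ltree \<Rightarrow> nat" where
  "score a (Node g []) = 0"
| "score a (Node g [t]) = score a t + iota_lbl a g"
| "score a (Node g (t1 # t2 # ts)) =
     (let ss = map (score a) (t1 # t2 # ts) in
      Max {ss ! i + iota (\<Sum>j\<in>{..<length ss} - {i}. ss ! j) | i. i < length ss})"

fun count_lbl :: "'g \<Rightarrow> 'g ltree \<Rightarrow> nat" where
  "count_lbl a (Node g ts) = iota_lbl a g + sum_list (map (count_lbl a) ts)"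

fun wf_tree :: "nat \<Rightarrow> 'g \<Rightarrow> 'g ltree \<Rightarrow> bool" where
  "wf_tree m eps (Node g ts) =
     (length ts \<le> m + 1 \<and> (length ts \<noteq> 1 \<longrightarrow> g = eps) \<and> (\<forall>t\<in>set ts. wf_tree m eps t))"

end

theory Submission
  imports Defs
begin

text \<open>With K = m + 1, induction on the tree gives the strict bound
  count_lbl a T < K ^ score a T for every letter a \<noteq> eps.
  A unary node labelled a adds one occurrence and one unit of score, and
  c < K^s implies c + 1 < K^(s+1) since K \<ge> 2.
  At a branching node with at most K children: if some child is the only one of
  positive score, the others contain no a at all and the bound passes up from
  that child; otherwise every child has score at most score T - 1, and K children
  each with fewer than K^(score T - 1) occurrences give fewer than K^score T.\<close>

lemma sum_less_power_if_iota_bounded: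
  fixes c f :: "'i \<Rightarrow> nat" and K S :: nat
  assumes "finite I" "I \<noteq> {}" "card I \<le> K"
    and c_less: "\<And>i. i \<in> I \<Longrightarrow> c i < K ^ f i"
    and S_ge: "\<And>i. i \<in> I \<Longrightarrow> f i + iota (\<Sum>j\<in>I - {i}. f j) \<le> S"
  shows "(\<Sum>i\<in>I. c i) < K ^ S"
proof -
  have "0 < card I" using assms(1,2) by (simp add: card_gt_0_iff)
  with assms(3) have "1 \<le> K" by linarith
  show ?thesis
  proof (cases "\<exists>i\<in>I. (\<Sum>j\<in>I - {i}. f j) = 0")
    case True
    then obtain i where i: "i \<in> I" and others: "(\<Sum>j\<in>I - {i}. f j) = 0" by blast
    have "c j = 0" if "j \<in> I - {i}" for j
      using c_less[of j] others that assms(1) by simp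
    hence "(\<Sum>j\<in>I. c j) = c i"
      using i assms(1) by (simp add: sum.remove)
    also have "\<dots> < K ^ f i" using c_less i .
    also have "\<dots> \<le> K ^ S" using S_ge[OF i] \<open>1 \<le> K\<close> by (intro power_increasing) auto
    finally show ?thesis .
  next
    case False
    hence f_less: "f i + 1 \<le> S" if "i \<in> I" for i
      using S_ge[OF that] that by (auto simp: iota_def)
    obtain i0 where "i0 \<in> I" using assms(2) by blast
    then obtain S' where S': "S = Suc S'" using f_less by (cases S) auto
    have "(\<Sum>i\<in>I. c i) < (\<Sum>i\<in>I. K ^ S')"
    proof (rule sum_strict_mono)
      fix i assume "i \<in> I"
      have "K ^ f i \<le> K ^ S'" using f_less[OF \<open>i \<in> I\<close>] S' \<open>1 \<le> K\<close> by (intro power_increasing) auto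
      thus "c i < K ^ S'" using c_less[OF \<open>i \<in> I\<close>] by linarith
    qed (use assms(1,2) in auto)
    also have "\<dots> = card I * K ^ S'" by simp
    also have "\<dots> \<le> K ^ S" using assms(3) S' by simp
    finally show ?thesis .
  qed
qed

lemma score_branching_ge:
  assumes "2 \<le> length ts" "i < length ts"
  shows "score a (ts ! i) + iota (\<Sum>j\<in>{..<length ts} - {i}. score a (ts ! j))
           \<le> score a (Node g ts)"
proof -
  obtain t1 t2 ts' where ts: "ts = t1 # t2 # ts'"
    using assms(1) by (cases ts rule: remdups_adj.cases) auto
  let ?ss = "map (score a) ts"
  let ?val = "\<lambda>i. ?ss ! i + iota (\<Sum>j\<in>{..<length ?ss} - {i}. ?ss ! j)"
  have "?val i \<le> Max {?val i | i. i < length ?ss}"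
    using assms(2) by (intro Max_ge) (auto intro!: exI[of _ i])
  also have "\<dots> = score a (Node g ts)"
    using ts by (simp add: Let_def)
  finally have "?val i \<le> score a (Node g ts)" .
  moreover have "(\<Sum>j\<in>{..<length ?ss} - {i}. ?ss ! j) = (\<Sum>j\<in>{..<length ts} - {i}. score a (ts ! j))"
    by (intro sum.cong) auto
  ultimately show ?thesis
    using assms(2) by simp
qed

lemma count_lbl_less_power_score:
  assumes "wf_tree m eps T" "a \<noteq> eps" "1 \<le> m"
  shows "count_lbl a T < (m + 1) ^ score a T"
  using assms(1)
proof (induction T)
  case (Node g ts)
  consider "ts = []" | t where "ts = [t]" | "2 \<le> length ts"
    by (cases ts rule: remdups_adj.cases) auto
  then show ?case
  proof cases
    case 1
    then show ?thesis using Node.prems assms(2) by (simp add: iota_lbl_def)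
  next
    case 2
    have IH: "count_lbl a t < (m + 1) ^ score a t"
      using Node 2 by simp
    have "(m + 1) ^ score a t < (m + 1) ^ Suc (score a t)"
      using assms(3) by simp
    with IH have "count_lbl a t + 1 < (m + 1) ^ Suc (score a t)"
      by linarith
    with IH show ?thesis
      using 2 by (auto simp: iota_lbl_def)
  next
    case 3
    have "g = eps" using Node.prems 3 by auto
    have "count_lbl a (Node g ts) = (\<Sum>i\<in>{..<length ts}. count_lbl a (ts ! i))"
      using \<open>g = eps\<close> assms(2) by (simp add: iota_lbl_def sum_list_sum_nth atLeast0LessThan)
    also have "\<dots> < (m + 1) ^ score a (Node g ts)"
    proof (rule sum_less_power_if_iota_bounded[where f = "\<lambda>i. score a (ts ! i)"])
      show "card {..<length ts} \<le> m + 1" using Node.prems by simp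
      show "{..<length ts} \<noteq> {}" using 3 by (auto simp: lessThan_empty_iff)
      show "count_lbl a (ts ! i) < (m + 1) ^ score a (ts ! i)" if "i \<in> {..<length ts}" for i
        using Node.IH Node.prems that by simp
      show "score a (ts ! i) + iota (\<Sum>j\<in>{..<length ts} - {i}. score a (ts ! j))
              \<le> score a (Node g ts)" if "i \<in> {..<length ts}" for i
        using score_branching_ge[OF 3] that by simp
    qed simp
    finally show ?thesis .
  qed
qed

theorem mainTheorem7:
  fixes A :: "'g set" and eps :: 'g and m N :: nat and T :: "'g ltree"
  assumes "m \<ge> 1" and "finite A" and "card A = m" and "eps \<notin> A"
    and "wf_tree m eps T"
    and "N \<ge> 1"
    and "\<forall>a\<in>A. count_lbl a T \<ge> N"
  shows "\<forall>a\<in>A. real (score a T) \<ge> log (real (m + 1)) (real N)"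
proof
  fix a assume "a \<in> A"
  have "N \<le> count_lbl a T" using assms(7) \<open>a \<in> A\<close> by blast
  also have "\<dots> \<le> (m + 1) ^ score a T"
    using count_lbl_less_power_score[OF assms(5) _ assms(1)] assms(4) \<open>a \<in> A\<close> by fastforce
  finally have "real N \<le> real (m + 1) ^ score a T"
    by (metis of_nat_le_iff of_nat_power)
  hence "log (real (m + 1)) (real N) \<le> log (real (m + 1)) (real (m + 1) ^ score a T)"
    using assms(1,6) by (subst log_le_cancel_iff) auto
  also have "\<dots> = real (score a T)" using assms(1) by (simp add: log_nat_power)
  finally show "real (score a T) \<ge> log (real (m + 1)) (real N)" .
qed

end
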